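(* Let $T$ be a block: tetrahedra $\Delta_1,\dots,\Delta_n$ all sharing a common edge $e$ with endpoints $x_1,x_2$, arranged cyclically around $e$, where for $i=1,\dots,n$ the tetrahedra $\Delta_i$ and $\Delta_{i+1}$ (indices mod $n$) are glued along a face $F_i$ containing $e$, and $e$ is not on the boundary. Let $N$ be normal coordinates on $T$ satisfying the matching equations. Build a directed graph $G$ with vertices $u_0,\dots,u_n,w_0,\dots,w_n$, where $u_i$ (resp. $w_i$) represents the normal arcs in $F_i$ crossing $e$ and separating $x_1$ (resp. $x_2$) from the other two vertices of $F_i$ (with $F_0=F_n$, but $u_0\neq u_n$ and $w_0\neq w_n$ as vertices of $G$). For each $i=1,\dots,n$, and each normal disk type in $\Delta_i$ meeting $e$, add one directed edge from the vertex of index $i-1$ corresponding to its arc in $F_{i-1}$ to the vertex of index $i$ corresponding to its arc in $F_i$ (so: triangle at $x_1$ gives $u_{i-1}\to u_i$, triangle at $x_2$ gives $w_{i-1}\to w_i$, and the two quadrilaterals meeting $e$ give $u_{i-1}\to w_i$ and $w_{i-1}\to u_i$), with capacity equal to the corresponding normal coordinate. Let $s_1=u_0$ and $t_1=u_n$. Then $N$ is immersible if and only if the maximum flow in $G$ from $s_1$ to $t_1$ equals the sum of the capacities of the edges leaving $s_1$.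
   Context: In a tetrahedron there are 7 normal disk types: 4 triangles (separating one vertex from the other three) and 3 quadrilaterals (separating two vertices from the other two); normal coordinates give the number of disks of each type in each tetrahedron. For a glued face and a normal arc type in it, the matching equation says the total number of disks (triangle plus quadrilateral) producing that arc on one side equals that on the other side. Placing the prescribed disks in general position (they may intersect), a global gluing is a choice, for each arc type in each glued face, of a bijection between disks on the two sides with that arc type; the glued result is a singular normal surface. $N$ is immersible if some global gluing yields an immersed surface, i.e., one with no branch point; in a block, a branch point occurs exactly when some closed curve formed by the glued normal disks meeting $e$ winds more than once around $e$. A flow from $s$ to $t$ in a directed graph with nonnegative integer capacities is a collection of directed $s$–$t$ paths using each edge $a$ at most $c(a)$ times; a maximum flow maximizes the number of paths. *)

theory Defs
  imports Main "HOL-Library.Multiset"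
begin

text \<open>Each tetrahedron of the block has vertices labelled 0 = x1, 1 = x2,
 2 = p (the third vertex of its "previous" glued face) and 3 = q (the third vertex
 of its "next" glued face).  So the previous face is {0,1,2}, the next face is {0,1,3},
 and the common edge e is {0,1}.
 Disk types: triangles T k (separating vertex k) and quadrilaterals
 Q01 = {0,1}|{2,3}, Q02 = {0,2}|{1,3}, Q03 = {0,3}|{1,2}.\<close>

datatype disk = T0 | T1 | T2 | T3 | Q01 | Q02 | Q03

text \<open>Normal arc types in a glued face (containing e) are labelled by the vertex
 of the face they separate: 0 = x1, 1 = x2, 2 = the third vertex of the face.
 arc_prev d / arc_next d: the arc type that disk type d produces in the previous /
 next face (None if d does not meet that face).\<close>

fun arc_prev :: "disk \<Rightarrow> nat option" where
  "arc_prev T0 = Some 0" | "arc_prev T1 = Some 1" | "arc_prev T2 = Some 2"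
| "arc_prev T3 = None" | "arc_prev Q01 = Some 2" | "arc_prev Q02 = Some 1"
| "arc_prev Q03 = Some 0"

fun arc_next :: "disk \<Rightarrow> nat option" where
  "arc_next T0 = Some 0" | "arc_next T1 = Some 1" | "arc_next T2 = None"
| "arc_next T3 = Some 2" | "arc_next Q01 = Some 2" | "arc_next Q02 = Some 0"
| "arc_next Q03 = Some 1"

definition meets_e :: "disk \<Rightarrow> bool" where
  "meets_e d \<longleftrightarrow> d \<in> {T0, T1, Q02, Q03}"

text \<open>A block with n tetrahedra is indexed by 0..n-1 (tetrahedron i is the paper's
 Delta_(i+1)); the next face of tetrahedron i is glued to the previous face of tetrahedron
 (i+1) mod n, identifying x1 with x1, x2 with x2 and q with p.
 Normal coordinates: N i d = number of disks of type d in tetrahedron i.\<close>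

definition matching :: "nat \<Rightarrow> (nat \<Rightarrow> disk \<Rightarrow> nat) \<Rightarrow> bool" where
  "matching n N \<longleftrightarrow> (\<forall>i<n. \<forall>a<3.
     (\<Sum>d\<in>{d. arc_next d = Some a}. N i d) = (\<Sum>d\<in>{d. arc_prev d = Some a}. N ((i+1) mod n) d))"

definition disks_next :: "(nat \<Rightarrow> disk \<Rightarrow> nat) \<Rightarrow> nat \<Rightarrow> (disk \<times> nat) set" where
  "disks_next N i = {(d,k). k < N i d \<and> arc_next d \<noteq> None}"

definition disks_prev :: "(nat \<Rightarrow> disk \<Rightarrow> nat) \<Rightarrow> nat \<Rightarrow> (disk \<times> nat) set" where
  "disks_prev N i = {(d,k). k < N i d \<and> arc_prev d \<noteq> None}"

definition global_gluing :: "nat \<Rightarrow> (nat \<Rightarrow> disk \<Rightarrow> nat) \<Rightarrow> (nat \<Rightarrow> disk \<times> nat \<Rightarrow> disk \<times> nat) \<Rightarrow> bool" where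
  "global_gluing n N \<sigma> \<longleftrightarrow> (\<forall>i<n.
     bij_betw (\<sigma> i) (disks_next N i) (disks_prev N ((i+1) mod n)) \<and>
     (\<forall>x\<in>disks_next N i. arc_prev (fst (\<sigma> i x)) = arc_next (fst x)))"

text \<open>Following a disk around e: glue across faces F_1, F_2, ..., F_m.\<close>
fun walk :: "(nat \<Rightarrow> disk \<times> nat \<Rightarrow> disk \<times> nat) \<Rightarrow> nat \<Rightarrow> disk \<times> nat \<Rightarrow> disk \<times> nat" where
  "walk \<sigma> 0 x = x"
| "walk \<sigma> (Suc m) x = \<sigma> m (walk \<sigma> m x)"

text \<open>No branch point: the closed curve through every disk meeting e closes up after one
 turn around e, i.e. it winds exactly once around e.\<close>
definition immersed_gluing :: "nat \<Rightarrow> (nat \<Rightarrow> disk \<Rightarrow> nat) \<Rightarrow> (nat \<Rightarrow> disk \<times> nat \<Rightarrow> disk \<times> nat) \<Rightarrow> bool" where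
  "immersed_gluing n N \<sigma> \<longleftrightarrow>
     (\<forall>d k. meets_e d \<and> k < N 0 d \<longrightarrow> walk \<sigma> n (d,k) = (d,k))"

definition immersible :: "nat \<Rightarrow> (nat \<Rightarrow> disk \<Rightarrow> nat) \<Rightarrow> bool" where
  "immersible n N \<longleftrightarrow> (\<exists>\<sigma>. global_gluing n N \<sigma> \<and> immersed_gluing n N \<sigma>)"

text \<open>Directed graph without parallel edges: edge set E, capacity c. A directed s-t path
 is a vertex list starting at s, ending at t, with consecutive pairs in E.\<close>

definition path_edges :: "'v list \<Rightarrow> ('v \<times> 'v) list" where
  "path_edges vs = zip vs (tl vs)"

definition st_path :: "('v \<times> 'v) set \<Rightarrow> 'v \<Rightarrow> 'v \<Rightarrow> 'v list \<Rightarrow> bool" where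
  "st_path E s t vs \<longleftrightarrow> vs \<noteq> [] \<and> hd vs = s \<and> last vs = t \<and> set (path_edges vs) \<subseteq> E"

text \<open>A flow: a multiset of s-t paths using each edge a at most c a times in total.\<close>
definition is_flow :: "('v \<times> 'v) set \<Rightarrow> ('v \<times> 'v \<Rightarrow> nat) \<Rightarrow> 'v \<Rightarrow> 'v \<Rightarrow> 'v list multiset \<Rightarrow> bool" where
  "is_flow E c s t P \<longleftrightarrow> (\<forall>p\<in>#P. st_path E s t p) \<and>
     (\<forall>a\<in>E. (\<Sum>p\<in>#P. count_list (path_edges p) a) \<le> c a)"

definition max_flow :: "('v \<times> 'v) set \<Rightarrow> ('v \<times> 'v \<Rightarrow> nat) \<Rightarrow> 'v \<Rightarrow> 'v \<Rightarrow> nat" where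
  "max_flow E c s t = Max {size P | P. is_flow E c s t P}"

datatype vert = U nat | W nat

text \<open>For the paper's Delta_i (= tetrahedron i-1 here), i = 1..n: T x1 gives u_(i-1) -> u_i,
 T x2 gives w_(i-1) -> w_i, the quad Q03 (arc at x1 in F_(i-1), at x2 in F_i) gives
 u_(i-1) -> w_i, the quad Q02 gives w_(i-1) -> u_i.\<close>

definition G_edges :: "nat \<Rightarrow> (vert \<times> vert) set" where
  "G_edges n = (\<Union>i\<in>{1..n}. {(U (i-1), U i), (W (i-1), W i), (U (i-1), W i), (W (i-1), U i)})"

fun G_cap :: "(nat \<Rightarrow> disk \<Rightarrow> nat) \<Rightarrow> vert \<times> vert \<Rightarrow> nat" where
  "G_cap N (U j, U i) = (if i = Suc j then N j T0 else 0)"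
| "G_cap N (W j, W i) = (if i = Suc j then N j T1 else 0)"
| "G_cap N (U j, W i) = (if i = Suc j then N j Q03 else 0)"
| "G_cap N (W j, U i) = (if i = Suc j then N j Q02 else 0)"

end

theory Submission
  imports Defs
begin

text \<open>
  A normal curve winding around \<open>e\<close> is recorded as a strand \<open>s :: nat \<Rightarrow> bool\<close>: \<open>s j\<close> says
  whether its arc in the face \<open>F_j\<close> separates \<open>x\<^sub>2\<close> (vertex \<open>w_j\<close> of \<open>G\<close>) or \<open>x\<^sub>1\<close>
  (vertex \<open>u_j\<close>), so in tetrahedron \<open>j\<close> it runs through a disk of type
  \<open>edge_disk (s j) (s (Suc j))\<close>. A gluing is immersed iff every such curve closes up after one
  turn, so immersibility amounts to a curve system: a multiset of strands with \<open>s 0 = s n\<close>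
  whose transitions in each tetrahedron are counted by \<open>N\<close>.

  The strands of a curve system that start at \<open>x\<^sub>1\<close> are \<open>s\<^sub>1\<close>-\<open>t\<^sub>1\<close> paths of \<open>G\<close> saturating
  the edges out of \<open>s\<^sub>1\<close>. Conversely, the residual capacities of a saturating flow still satisfy
  the matching equations, so they decompose layer by layer into strands. Saturation at \<open>s\<^sub>1\<close>,
  and by the matching equations also at \<open>t\<^sub>1\<close>, forces these strands to start and end at
  \<open>x\<^sub>2\<close>; together with the flow paths they form a curve system.
\<close>

lemma bij_betw_card_filter:
  assumes "bij_betw g A B"
  shows "card {a\<in>A. P (g a)} = card {b\<in>B. P b}"
proof -
  have "g ` {a\<in>A. P (g a)} = {b\<in>B. P b}" "inj_on g {a\<in>A. P (g a)}"
    using assms unfolding bij_betw_def by (auto intro: inj_on_subset)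
  then show ?thesis by (metis card_image)
qed

lemma bij_betw_restrict_filter:
  assumes "bij_betw h A B" and "\<And>a. a \<in> A \<Longrightarrow> P (h a) \<longleftrightarrow> Q a"
  shows "bij_betw h {a \<in> A. Q a} {b \<in> B. P b}"
proof (rule bij_betw_subset[OF assms(1)])
  show "h ` {a \<in> A. Q a} = {b \<in> B. P b}"
    using assms unfolding bij_betw_def by force
qed simp

lemma ex_bij_betw_fibrewise:
  assumes "finite A" "finite B" "\<And>y. card {a\<in>A. f a = y} = card {b\<in>B. g b = y}"
  obtains h where "bij_betw h A B" "\<And>a. a \<in> A \<Longrightarrow> g (h a) = f a"
proof -
  have "\<exists>h. bij_betw h {a\<in>A. f a = y} {b\<in>B. g b = y}" for y
    by (rule finite_same_card_bij) (use assms in auto)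
  then obtain hy where hy: "\<And>y. bij_betw (hy y) {a\<in>A. f a = y} {b\<in>B. g b = y}"
    by metis
  define h where "h a = hy (f a) a" for a
  have h_fibre: "h a \<in> B \<and> g (h a) = f a" if "a \<in> A" for a
    using hy[of "f a"] that unfolding h_def bij_betw_def by blast
  have "inj_on h A"
  proof (rule inj_onI)
    fix a a' assume "a \<in> A" "a' \<in> A" "h a = h a'"
    moreover from this have "f a = f a'" using h_fibre by metis
    ultimately show "a = a'" using hy[of "f a"] unfolding h_def bij_betw_def inj_on_def by auto
  qed
  moreover have "B \<subseteq> h ` A"
  proof
    fix b assume "b \<in> B"
    then have "b \<in> hy (g b) ` {a\<in>A. f a = g b}"
      using hy[of "g b"] unfolding bij_betw_def by simp
    then obtain a where "a \<in> A" "f a = g b" "b = hy (g b) a" by blast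
    then have "b = h a" unfolding h_def by simp
    with \<open>a \<in> A\<close> show "b \<in> h ` A" by blast
  qed
  ultimately have "bij_betw h A B" using h_fibre unfolding bij_betw_def by auto
  with h_fibre show thesis using that by blast
qed

lemma count_image_mset_eq_size_filter:
  "count (image_mset f M) y = size {#x \<in># M. f x = y#}"
  by (simp add: count_conv_size_mset flip: image_mset_filter_mset_swap)

lemma sum_mset_indicator:
  "(\<Sum>x\<in>#M. if P x then 1 else 0 :: nat) = size {#x \<in># M. P x#}"
  by (induction M) auto

lemma ex_sub_mset_of_size:
  fixes M :: "'a multiset"
  assumes "k \<le> size M"
  obtains A B where "M = A + B" "size A = k"
proof -
  obtain xs where "mset xs = M" using ex_mset by blast
  then have "M = mset (take k xs) + mset (drop k xs)" "size (mset (take k xs)) = k"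
    using assms by (auto simp flip: mset_append)
  then show thesis using that by blast
qed

lemma card_indices_eq_size_filter:
  "card {l. l < length xs \<and> P (xs ! l)} = size {#x \<in># mset xs. P x#}"
  by (simp add: length_filter_conv_card flip: mset_filter)

section \<open>Flows saturating the source\<close>

lemma size_flow_le_out_capacity:
  assumes flow: "is_flow E c s t P" and "s \<noteq> t" and fin: "finite {a\<in>E. fst a = s}"
  shows "size P \<le> (\<Sum>a\<in>{a\<in>E. fst a = s}. c a)"
proof -
  let ?O = "{a\<in>E. fst a = s}"
  have leaves_source: "1 \<le> (\<Sum>a\<in>?O. count_list (path_edges p) a)" if "p \<in># P" for p
  proof -
    have p: "st_path E s t p" using flow that unfolding is_flow_def by blast
    then obtain q where q: "p = s # q"
      unfolding st_path_def by (cases p) auto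
    have "q \<noteq> []" using p q \<open>s \<noteq> t\<close> unfolding st_path_def by auto
    with q have first: "(s, hd q) \<in> set (path_edges p)"
      unfolding path_edges_def by (cases q) auto
    then have "(s, hd q) \<in> ?O" using p unfolding st_path_def by auto
    moreover have "count_list (path_edges p) (s, hd q) \<noteq> 0"
      using first by (simp add: count_list_0_iff)
    ultimately show ?thesis
      using fin member_le_sum[of "(s, hd q)" ?O "count_list (path_edges p)"] by linarith
  qed
  have swap: "(\<Sum>p\<in>#M. \<Sum>a\<in>?O. f p a) = (\<Sum>a\<in>?O. \<Sum>p\<in>#M. f p a)"
    for M :: "'a list multiset" and f :: "'a list \<Rightarrow> 'a \<times> 'a \<Rightarrow> nat"
    by (induction M) (simp_all add: sum.distrib)
  have "size P = (\<Sum>p\<in>#P. 1)" by (rule size_eq_sum_mset)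
  also have "\<dots> \<le> (\<Sum>p\<in>#P. \<Sum>a\<in>?O. count_list (path_edges p) a)"
    by (rule sum_mset_mono) (use leaves_source in auto)
  also have "\<dots> = (\<Sum>a\<in>?O. \<Sum>p\<in>#P. count_list (path_edges p) a)" by (rule swap)
  also have "\<dots> \<le> (\<Sum>a\<in>?O. c a)"
    by (rule sum_mono) (use flow in \<open>auto simp: is_flow_def\<close>)
  finally show ?thesis .
qed

lemma max_flow_eq_out_capacity_iff:
  fixes c :: "'a \<times> 'a \<Rightarrow> nat"
  assumes "s \<noteq> t" and "finite {a\<in>E. fst a = s}"
  defines "cap \<equiv> \<Sum>a\<in>{a\<in>E. fst a = s}. c a"
  shows "max_flow E c s t = cap \<longleftrightarrow> (\<exists>P. is_flow E c s t P \<and> size P = cap)"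
proof -
  define F where "F = {size P | P. is_flow E c s t P}"
  have bounded: "F \<subseteq> {..cap}"
    using size_flow_le_out_capacity[OF _ assms(1,2)] unfolding F_def cap_def by auto
  then have "finite F" by (rule finite_subset) simp
  moreover have "0 \<in> F"
    unfolding F_def is_flow_def by (auto intro!: exI[of _ "{#}"])
  ultimately have "Max F = cap \<longleftrightarrow> cap \<in> F"
    using bounded by (metis Max_eqI Max_in atMost_iff empty_iff subsetD)
  then show ?thesis unfolding max_flow_def F_def by auto
qed

section \<open>Strands\<close>

definition transitions :: "(nat \<Rightarrow> bool) multiset \<Rightarrow> nat \<Rightarrow> (bool \<times> bool) multiset" where
  "transitions S j = {#(s j, s (Suc j)). s \<in># S#}"

lemma transitions_union [simp]: "transitions (S + T) j = transitions S j + transitions T j"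
  by (simp add: transitions_def)

lemma count_transitions:
  "count (transitions S j) (X, Y) = size {#s \<in># S. s j = X \<and> s (Suc j) = Y#}"
  by (simp add: transitions_def count_image_mset_eq_size_filter)

lemma count_transitions_strand:
  "s \<in># S \<Longrightarrow> count (transitions S j) (s j, s (Suc j)) \<noteq> 0"
  by (simp add: transitions_def)

lemma no_transitions_from_imp_label_ne:
  assumes "\<And>Y. count (transitions S j) (X, Y) = 0" and "s \<in># S"
  shows "s j \<noteq> X"
proof
  assume "s j = X"
  then show False using assms(1)[of "s (Suc j)"] count_transitions_strand[OF assms(2), of j] by simp
qed

lemma no_transitions_into_imp_label_ne:
  assumes "\<And>X. count (transitions S j) (X, Y) = 0" and "s \<in># S"
  shows "s (Suc j) \<noteq> Y"
proof
  assume "s (Suc j) = Y"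
  then show False using assms(1)[of "s j"] count_transitions_strand[OF assms(2), of j] by simp
qed

lemma size_strands_at_eq_outgoing:
  "size {#s \<in># S. s j = X#} = count (transitions S j) (X, False) + count (transitions S j) (X, True)"
  by (induction S) (auto simp: count_transitions)

lemma size_strands_at_Suc_eq_incoming:
  "size {#s \<in># S. s (Suc j) = Y#} = count (transitions S j) (False, Y) + count (transitions S j) (True, Y)"
  by (induction S) (auto simp: count_transitions)

lemma transitions_conservation:
  "count (transitions S j) (False, Y) + count (transitions S j) (True, Y) =
   count (transitions S (Suc j)) (Y, False) + count (transitions S (Suc j)) (Y, True)"
  by (simp flip: size_strands_at_eq_outgoing size_strands_at_Suc_eq_incoming)

lemma count_transitions_mono:
  "S \<subseteq># T \<Longrightarrow> count (transitions S j) x \<le> count (transitions T j) x"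
  unfolding transitions_def by (simp add: image_mset_subseteq_mono mset_subset_eq_count)

lemma transitions_update_before:
  "j < m \<Longrightarrow> transitions {#s(Suc m := Y). s \<in># M#} j = transitions M j"
  by (simp add: transitions_def image_mset.compositionality comp_def)

lemma transitions_update_at:
  assumes "\<And>s. s \<in># M \<Longrightarrow> s m = X"
  shows "transitions {#s(Suc m := Y). s \<in># M#} m = replicate_mset (size M) (X, Y)"
proof -
  have "transitions {#s(Suc m := Y). s \<in># M#} m = {#(X, Y). s \<in># M#}"
    unfolding transitions_def image_mset.compositionality comp_def
    using assms by (auto intro: image_mset_cong)
  then show ?thesis by (simp add: image_mset_const_eq)
qed

lemma ex_strands_with_label_counts:
  obtains S :: "(nat \<Rightarrow> bool) multiset" where "\<And>X. size {#s \<in># S. s j = X#} = h X"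
proof
  have filter_replicate: "filter_mset P (replicate_mset k x) = (if P x then replicate_mset k x else {#})"
    for P and k and x :: "nat \<Rightarrow> bool"
    by (induction k) auto
  fix X
  show "size {#s \<in># replicate_mset (h False) (\<lambda>_. False) + replicate_mset (h True) (\<lambda>_. True). s j = X#} = h X"
    by (cases X) (simp_all add: filter_replicate)
qed

lemma extend_strands:
  assumes "\<And>X. size {#s \<in># S. s m = X#} = g X False + g X True"
  obtains S' where "\<And>j. j < m \<Longrightarrow> transitions S' j = transitions S j"
    and "\<And>X Y. count (transitions S' m) (X, Y) = g X Y"
proof -
  have "\<exists>A B. {#s \<in># S. s m = X#} = A + B \<and> size A = g X False" for X
    by (rule ex_sub_mset_of_size[of "g X False"]) (use assms in auto)
  then obtain A B where AB: "\<And>X. {#s \<in># S. s m = X#} = A X + B X" "\<And>X. size (A X) = g X False"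
    by metis
  then have size_B: "size (B X) = g X True" for X
    using assms[of X] by (metis add_left_cancel size_union)
  have label_m: "s m = X" if "s \<in># A X + B X" for s X
    using that AB(1)[of X] by (metis (mono_tags) mem_Collect_eq set_mset_filter)
  have "S = {#s \<in># S. s m#} + {#s \<in># S. \<not> s m#}" by (rule multiset_partition)
  also have "\<dots> = A True + B True + (A False + B False)"
    using AB(1)[of True] AB(1)[of False] by simp
  finally have S_split: "S = A False + A True + B False + B True" by (simp add: ac_simps)
  define S' where "S' = {#s(Suc m := False). s \<in># A False + A True#} + {#s(Suc m := True). s \<in># B False + B True#}"
  show thesis
  proof
    show "transitions S' j = transitions S j" if "j < m" for j
      using that by (simp add: S'_def S_split transitions_update_before ac_simps)
    have "transitions {#s(Suc m := False). s \<in># A X#} m = replicate_mset (g X False) (X, False)"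
      and "transitions {#s(Suc m := True). s \<in># B X#} m = replicate_mset (g X True) (X, True)" for X
      by (simp_all add: transitions_update_at[of _ m X] label_m flip: AB(2) size_B)
    then show "count (transitions S' m) (X, Y) = g X Y" for X Y
      unfolding S'_def by (cases X; cases Y) simp_all
  qed
qed

lemma ex_strands_with_transitions:
  fixes f :: "nat \<Rightarrow> bool \<Rightarrow> bool \<Rightarrow> nat"
  assumes conservation:
    "\<And>j Y. 0 < j \<Longrightarrow> j < n \<Longrightarrow> f (j - 1) False Y + f (j - 1) True Y = f j Y False + f j Y True"
  obtains S where "\<And>j X Y. j < n \<Longrightarrow> count (transitions S j) (X, Y) = f j X Y"
proof -
  have "\<exists>S. \<forall>j<k. \<forall>X Y. count (transitions S j) (X, Y) = f j X Y" if "k \<le> n" for k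
    using that
  proof (induction k)
    case 0
    show ?case by simp
  next
    case (Suc k)
    then obtain S where S: "\<And>j X Y. j < k \<Longrightarrow> count (transitions S j) (X, Y) = f j X Y"
      by auto
    have "\<exists>S0. (\<forall>j<k. transitions S0 j = transitions S j) \<and>
      (\<forall>X. size {#s \<in># S0. s k = X#} = f k X False + f k X True)"
    proof (cases k)
      case 0
      then show ?thesis
        using ex_strands_with_label_counts[where j = k and h = "\<lambda>X. f k X False + f k X True"]
        by blast
    next
      case (Suc i)
      have "size {#s \<in># S. s k = X#} = f i False X + f i True X" for X
        using S[of i] Suc size_strands_at_Suc_eq_incoming[where S = S and j = i] by simp
      with conservation[of k] Suc \<open>Suc k \<le> n\<close> show ?thesis by auto
    qed
    then obtain S0 where S0_prefix: "\<And>j. j < k \<Longrightarrow> transitions S0 j = transitions S j"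
      and S0_labels: "\<And>X. size {#s \<in># S0. s k = X#} = f k X False + f k X True"
      by blast
    obtain S' where "\<And>j. j < k \<Longrightarrow> transitions S' j = transitions S0 j"
      and "\<And>X Y. count (transitions S' k) (X, Y) = f k X Y"
      using extend_strands[OF S0_labels] by blast
    then show ?case using S S0_prefix by (metis less_Suc_eq)
  qed
  then show thesis using that by blast
qed

section \<open>Disks meeting the edge e\<close>

text \<open>The disk type meeting \<open>e\<close> whose arc in the previous face separates \<open>x\<^sub>2\<close> iff \<open>X\<close>
  and whose arc in the next face separates \<open>x\<^sub>2\<close> iff \<open>Y\<close>.\<close>
fun edge_disk :: "bool \<Rightarrow> bool \<Rightarrow> disk" where
  "edge_disk False False = T0"
| "edge_disk True True = T1"
| "edge_disk False True = Q03"
| "edge_disk True False = Q02"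

lemma edge_disk_inject [simp]: "edge_disk X Y = edge_disk X' Y' \<longleftrightarrow> X = X' \<and> Y = Y'"
  by (cases X; cases Y; cases X'; cases Y') simp_all

lemma arcs_edge_disk [simp]:
  "arc_prev (edge_disk X Y) = Some (if X then 1 else 0)"
  "arc_next (edge_disk X Y) = Some (if Y then 1 else 0)"
  by (cases X; cases Y; simp)+

lemma meets_e_edge_disk [simp]: "meets_e (edge_disk X Y)"
  by (cases X; cases Y) (simp_all add: meets_e_def)

lemma meets_e_iff_edge_disk: "meets_e d \<longleftrightarrow> (\<exists>X Y. d = edge_disk X Y)"
proof
  show "meets_e d \<Longrightarrow> \<exists>X Y. d = edge_disk X Y"
    unfolding meets_e_def by (auto intro: edge_disk.simps[symmetric])
qed auto

lemma edge_disk_eq_iff: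
  "meets_e d \<Longrightarrow> d = edge_disk X Y \<longleftrightarrow> (arc_prev d = Some 1 \<longleftrightarrow> X) \<and> (arc_next d = Some 1 \<longleftrightarrow> Y)"
  by (cases d; cases X; cases Y) (simp_all add: meets_e_def)

lemma meets_e_iff_arc_next: "meets_e d \<longleftrightarrow> arc_next d \<noteq> None \<and> arc_next d \<noteq> Some 2"
  by (cases d) (simp_all add: meets_e_def)

lemma meets_e_iff_arc_prev: "meets_e d \<longleftrightarrow> arc_prev d \<noteq> None \<and> arc_prev d \<noteq> Some 2"
  by (cases d) (simp_all add: meets_e_def)

lemma finite_disk_set [simp]: "finite (D :: disk set)"
proof (rule finite_subset)
  show "D \<subseteq> {T0, T1, T2, T3, Q01, Q02, Q03}" by (auto intro: disk.exhaust)
qed simp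

lemma matching_edge_disks:
  assumes "matching n N" and "i < n"
  shows "N i (edge_disk False Y) + N i (edge_disk True Y) =
    N (Suc i mod n) (edge_disk Y False) + N (Suc i mod n) (edge_disk Y True)"
proof -
  have arcs: "(\<Sum>d\<in>{d. arc_next d = Some a}. N i d) = (\<Sum>d\<in>{d. arc_prev d = Some a}. N (Suc i mod n) d)"
    if "a < 3" for a
    using assms that unfolding matching_def by simp
  have "{d. arc_next d = Some 0} = {T0, Q02}" "{d. arc_prev d = Some 0} = {T0, Q03}"
    "{d. arc_next d = Some 1} = {T1, Q03}" "{d. arc_prev d = Some 1} = {T1, Q02}"
    by (auto elim: arc_next.elims arc_prev.elims)
  then show ?thesis using arcs[of 0] arcs[of 1] by (cases Y) simp_all
qed

definition edge_disks :: "(nat \<Rightarrow> disk \<Rightarrow> nat) \<Rightarrow> nat \<Rightarrow> (disk \<times> nat) set" where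
  "edge_disks N i = (SIGMA d:{d. meets_e d}. {..<N i d})"

definition off_edge_next :: "(nat \<Rightarrow> disk \<Rightarrow> nat) \<Rightarrow> nat \<Rightarrow> (disk \<times> nat) set" where
  "off_edge_next N i = (SIGMA d:{d. arc_next d = Some 2}. {..<N i d})"

definition off_edge_prev :: "(nat \<Rightarrow> disk \<Rightarrow> nat) \<Rightarrow> nat \<Rightarrow> (disk \<times> nat) set" where
  "off_edge_prev N i = (SIGMA d:{d. arc_prev d = Some 2}. {..<N i d})"

lemma finite_edge_disks [simp]: "finite (edge_disks N i)"
  unfolding edge_disks_def by simp

lemma card_edge_disks_fibre:
  assumes "meets_e d"
  shows "card {x \<in> edge_disks N i. fst x = d} = N i d"
proof -
  have "{x \<in> edge_disks N i. fst x = d} = {d} \<times> {..<N i d}"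
    using assms unfolding edge_disks_def by auto
  then show ?thesis by (simp add: card_cartesian_product)
qed

lemma disks_next_eq: "disks_next N i = edge_disks N i \<union> off_edge_next N i"
  unfolding disks_next_def edge_disks_def off_edge_next_def meets_e_iff_arc_next by auto

lemma disks_prev_eq: "disks_prev N i = edge_disks N i \<union> off_edge_prev N i"
  unfolding disks_prev_def edge_disks_def off_edge_prev_def meets_e_iff_arc_prev by auto

lemma edge_disks_disjoint_off_edge:
  "edge_disks N i \<inter> off_edge_next N i = {}" "edge_disks N i \<inter> off_edge_prev N i = {}"
  unfolding edge_disks_def off_edge_next_def off_edge_prev_def by (auto simp: meets_e_def)

lemma matching_ex_bij_off_edge:
  assumes "matching n N" and "i < n"
  shows "\<exists>\<rho>. bij_betw \<rho> (off_edge_next N i) (off_edge_prev N (Suc i mod n))"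
proof (rule finite_same_card_bij)
  show "card (off_edge_next N i) = card (off_edge_prev N (Suc i mod n))"
    using assms unfolding matching_def off_edge_next_def off_edge_prev_def by simp
qed (simp_all add: off_edge_next_def off_edge_prev_def)

section \<open>Flows in G as strands\<close>

fun level :: "vert \<Rightarrow> nat" where
  "level (U i) = i"
| "level (W i) = i"

fun is_W :: "vert \<Rightarrow> bool" where
  "is_W (U i) = False"
| "is_W (W i) = True"

definition vert_at :: "bool \<Rightarrow> nat \<Rightarrow> vert" where
  "vert_at X j = (if X then W j else U j)"

lemma level_vert_at [simp]: "level (vert_at X j) = j" "is_W (vert_at X j) = X"
  by (simp_all add: vert_at_def)

lemma vert_at_level_is_W: "vert_at (is_W v) (level v) = v"
  by (cases v) (simp_all add: vert_at_def)

lemma vert_at_eq_iff [simp]: "vert_at X i = vert_at Y j \<longleftrightarrow> X = Y \<and> i = j"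
  by (simp add: vert_at_def)

lemma vert_at_eq_U_iff [simp]: "vert_at X i = U j \<longleftrightarrow> \<not> X \<and> i = j"
  by (simp add: vert_at_def)

lemma G_edges_iff: "(v, w) \<in> G_edges n \<longleftrightarrow> level w = Suc (level v) \<and> level v < n"
  unfolding G_edges_def by (cases v; cases w) auto

lemma G_edges_eq: "G_edges n = {(vert_at X j, vert_at Y (Suc j)) | X Y j. j < n}"
proof -
  have "(v, w) \<in> G_edges n \<longleftrightarrow> (\<exists>X Y j. j < n \<and> v = vert_at X j \<and> w = vert_at Y (Suc j))" for v w
    unfolding G_edges_iff by (metis level_vert_at(1) vert_at_level_is_W)
  then show ?thesis by auto
qed

lemma ball_G_edges_iff:
  "(\<forall>a\<in>G_edges n. P a) \<longleftrightarrow> (\<forall>j<n. \<forall>X Y. P (vert_at X j, vert_at Y (Suc j)))"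
  unfolding G_edges_eq by blast

lemma G_cap_vert_at [simp]: "G_cap N (vert_at X j, vert_at Y (Suc j)) = N j (edge_disk X Y)"
  by (cases X; cases Y) (simp_all add: vert_at_def)

lemma G_out_capacity_U0:
  assumes "n \<ge> 1"
  shows "(\<Sum>a\<in>{a\<in>G_edges n. fst a = U 0}. G_cap N a) = N 0 T0 + N 0 Q03"
proof -
  have "{a\<in>G_edges n. fst a = U 0} = {(vert_at False 0, vert_at False 1), (vert_at False 0, vert_at True 1)}"
    using assms unfolding G_edges_eq by (auto simp: vert_at_def)
  then show ?thesis by (simp add: vert_at_def)
qed

definition strand_path :: "(nat \<Rightarrow> bool) \<Rightarrow> nat \<Rightarrow> vert list" where
  "strand_path s n = map (\<lambda>j. vert_at (s j) j) [0..<Suc n]"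

lemma path_edges_strand_path:
  "path_edges (strand_path s n) = map (\<lambda>j. (vert_at (s j) j, vert_at (s (Suc j)) (Suc j))) [0..<n]"
  unfolding path_edges_def strand_path_def
  by (rule nth_equalityI) (auto simp: nth_tl simp del: upt_Suc)

lemma count_path_edges_strand_path:
  "count_list (path_edges (strand_path s n)) (vert_at X j, vert_at Y (Suc j)) =
    (if j < n \<and> s j = X \<and> s (Suc j) = Y then 1 else 0)"
  unfolding path_edges_strand_path by (induction n) auto

lemma st_path_strand_path_iff:
  "st_path (G_edges n) (U 0) (U n) (strand_path s n) \<longleftrightarrow> \<not> s 0 \<and> \<not> s n"
proof -
  have "set (path_edges (strand_path s n)) \<subseteq> G_edges n"
    unfolding path_edges_strand_path G_edges_eq by auto
  moreover have "hd (strand_path s n) = vert_at (s 0) 0" "last (strand_path s n) = vert_at (s n) n"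
    unfolding strand_path_def by (simp_all add: hd_map last_map del: upt_Suc)
  ultimately show ?thesis unfolding st_path_def by (simp add: strand_path_def)
qed

lemma st_path_level:
  assumes "st_path (G_edges n) (U 0) t p" and "i < length p"
  shows "level (p ! i) = i"
  using assms(2)
proof (induction i)
  case 0
  then show ?case using assms(1) by (simp add: st_path_def hd_conv_nth)
next
  case (Suc i)
  then have "(p ! i, p ! Suc i) \<in> set (path_edges p)"
    unfolding path_edges_def by (force simp: set_zip nth_tl)
  then show ?case using Suc assms(1) by (auto simp: st_path_def G_edges_iff)
qed

lemma st_path_eq_strand_path:
  assumes "st_path (G_edges n) (U 0) (U n) p"
  shows "p = strand_path (\<lambda>j. is_W (p ! j)) n"
proof -
  have "p \<noteq> []" "last p = U n" using assms by (auto simp: st_path_def)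
  then have "level (p ! (length p - 1)) = n" by (simp add: last_conv_nth)
  then have "length p = Suc n"
    using st_path_level[OF assms, of "length p - 1"] \<open>p \<noteq> []\<close> by simp
  show ?thesis
    unfolding strand_path_def
  proof (rule nth_equalityI)
    show "length p = length (map (\<lambda>j. vert_at (is_W (p ! j)) j) [0..<Suc n])"
      using \<open>length p = Suc n\<close> by simp
    fix i assume "i < length p"
    then have "map (\<lambda>j. vert_at (is_W (p ! j)) j) [0..<Suc n] ! i = vert_at (is_W (p ! i)) (level (p ! i))"
      using \<open>length p = Suc n\<close> st_path_level[OF assms] by (simp del: upt_Suc)
    then show "p ! i = map (\<lambda>j. vert_at (is_W (p ! j)) j) [0..<Suc n] ! i"
      by (simp add: vert_at_level_is_W)
  qed
qed

definition flow_strands :: "nat \<Rightarrow> (nat \<Rightarrow> disk \<Rightarrow> nat) \<Rightarrow> (nat \<Rightarrow> bool) multiset \<Rightarrow> bool" where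
  "flow_strands n N S \<longleftrightarrow> (\<forall>s\<in>#S. \<not> s 0 \<and> \<not> s n) \<and>
     (\<forall>j<n. \<forall>X Y. count (transitions S j) (X, Y) \<le> N j (edge_disk X Y))"

lemma is_flow_strand_paths_iff:
  "is_flow (G_edges n) (G_cap N) (U 0) (U n) {#strand_path s n. s \<in># S#} \<longleftrightarrow> flow_strands n N S"
proof -
  have load: "(\<Sum>p\<in>#{#strand_path s n. s \<in># S#}. count_list (path_edges p) (vert_at X j, vert_at Y (Suc j))) =
    count (transitions S j) (X, Y)" if "j < n" for X Y j
    using that by (simp add: image_mset.compositionality comp_def count_path_edges_strand_path
        sum_mset_indicator count_transitions)
  show ?thesis
    unfolding is_flow_def flow_strands_def ball_G_edges_iff
    by (simp add: st_path_strand_path_iff load cong: conj_cong)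
qed

lemma ex_flow_iff_ex_flow_strands:
  "(\<exists>P. is_flow (G_edges n) (G_cap N) (U 0) (U n) P \<and> size P = k) \<longleftrightarrow> (\<exists>S. flow_strands n N S \<and> size S = k)"
proof
  assume "\<exists>P. is_flow (G_edges n) (G_cap N) (U 0) (U n) P \<and> size P = k"
  then obtain P where P: "is_flow (G_edges n) (G_cap N) (U 0) (U n) P" "size P = k" by blast
  define S where "S = {#(\<lambda>j. is_W (p ! j)). p \<in># P#}"
  have "{#strand_path s n. s \<in># S#} = {#p. p \<in># P#}"
    unfolding S_def image_mset.compositionality comp_def
  proof (rule image_mset_cong)
    fix p assume "p \<in># P"
    then have "st_path (G_edges n) (U 0) (U n) p" using P(1) unfolding is_flow_def by blast
    then show "strand_path (\<lambda>j. is_W (p ! j)) n = p" by (rule st_path_eq_strand_path[symmetric])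
  qed
  then show "\<exists>S. flow_strands n N S \<and> size S = k"
    using P is_flow_strand_paths_iff[of n N S] unfolding S_def by auto
next
  assume "\<exists>S. flow_strands n N S \<and> size S = k"
  then show "\<exists>P. is_flow (G_edges n) (G_cap N) (U 0) (U n) P \<and> size P = k"
    by (metis is_flow_strand_paths_iff size_image_mset)
qed

section \<open>Curve systems and saturating flows\<close>

definition curve_system :: "nat \<Rightarrow> (nat \<Rightarrow> disk \<Rightarrow> nat) \<Rightarrow> (nat \<Rightarrow> bool) multiset \<Rightarrow> bool" where
  "curve_system n N S \<longleftrightarrow> (\<forall>s\<in>#S. s 0 = s n) \<and>
     (\<forall>j<n. \<forall>X Y. count (transitions S j) (X, Y) = N j (edge_disk X Y))"

lemma curve_system_imp_flow_strands:
  assumes "n \<ge> 1" and curves: "curve_system n N S"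
  shows "flow_strands n N {#s \<in># S. \<not> s 0#}" and "size {#s \<in># S. \<not> s 0#} = N 0 T0 + N 0 Q03"
proof -
  have closed: "s 0 = s n" if "s \<in># S" for s
    using bspec[OF conjunct1[OF curves[unfolded curve_system_def]] that] .
  have "\<not> s 0 \<and> \<not> s n" if "s \<in># {#s \<in># S. \<not> s 0#}" for s
    using that closed[of s] by simp
  moreover have "count (transitions {#s \<in># S. \<not> s 0#} j) (X, Y) \<le> N j (edge_disk X Y)"
    if "j < n" for j X Y
  proof -
    have "count (transitions {#s \<in># S. \<not> s 0#} j) (X, Y) \<le> count (transitions S j) (X, Y)"
      by (rule count_transitions_mono) simp
    then show ?thesis using curves that unfolding curve_system_def by simp
  qed
  ultimately show "flow_strands n N {#s \<in># S. \<not> s 0#}"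
    unfolding flow_strands_def by blast
  show "size {#s \<in># S. \<not> s 0#} = N 0 T0 + N 0 Q03"
    using size_strands_at_eq_outgoing[where S = S and j = 0 and X = False] assms
    unfolding curve_system_def by simp
qed

lemma size_flow_strands_eq_outgoing_U0:
  assumes "flow_strands n N S" and "n \<ge> 1"
  shows "count (transitions S 0) (False, False) + count (transitions S 0) (False, True) = size S"
proof -
  have "{#s \<in># S. \<not> s 0#} = {#s \<in># S. True#}"
    by (rule filter_mset_cong0) (use bspec[OF conjunct1[OF assms(1)[unfolded flow_strands_def]]] in blast)
  then show ?thesis using size_strands_at_eq_outgoing[where S = S and j = 0 and X = False] by simp
qed

lemma size_flow_strands_eq_incoming_Un:
  assumes "flow_strands n N S" and "n \<ge> 1"
  shows "count (transitions S (n - 1)) (False, False) + count (transitions S (n - 1)) (True, False) = size S"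
proof -
  have "{#s \<in># S. \<not> s n#} = {#s \<in># S. True#}"
    by (rule filter_mset_cong0) (use bspec[OF conjunct1[OF assms(1)[unfolded flow_strands_def]]] in blast)
  then show ?thesis
    using size_strands_at_Suc_eq_incoming[where S = S and j = "n - 1" and Y = False] assms(2) by simp
qed

lemma flow_strands_imp_curve_system:
  assumes n: "n \<ge> 1" and mt: "matching n N"
    and S0: "flow_strands n N S0" and size_S0: "size S0 = N 0 T0 + N 0 Q03"
  obtains S where "curve_system n N S"
proof -
  let ?t = "\<lambda>j X Y. count (transitions S0 j) (X, Y)"
  have S0_labels: "\<not> s 0 \<and> \<not> s n" if "s \<in># S0" for s
    using bspec[OF conjunct1[OF S0[unfolded flow_strands_def]] that] .
  have le: "?t j X Y \<le> N j (edge_disk X Y)" if "j < n" for j X Y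
    using S0 that unfolding flow_strands_def by simp
  define r where "r j X Y = N j (edge_disk X Y) - ?t j X Y" for j X Y
  have r_conservation: "r (j - 1) False Y + r (j - 1) True Y = r j Y False + r j Y True"
    if "0 < j" "j < n" for j Y
    using matching_edge_disks[OF mt, of "j - 1" Y] transitions_conservation[of S0 "j - 1" Y] that
      le[of "j - 1" False Y] le[of "j - 1" True Y] le[of j Y False] le[of j Y True]
    unfolding r_def by simp
  obtain S1 where S1: "\<And>j X Y. j < n \<Longrightarrow> count (transitions S1 j) (X, Y) = r j X Y"
    using ex_strands_with_transitions[where f = r, OF r_conservation] by blast
  note out_0 = size_flow_strands_eq_outgoing_U0[OF S0 n]
    and in_n = size_flow_strands_eq_incoming_Un[OF S0 n]
  \<comment> \<open>the flow saturates \<open>s\<^sub>1\<close>, and hence \<open>t\<^sub>1\<close>: no residual capacity leaves \<open>u\<^sub>0\<close> or enters \<open>u\<^sub>n\<close>\<close>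
  have no_start_at_x1: "r 0 False Y = 0" for Y
    using out_0 size_S0 le[of 0 False False] le[of 0 False True] n unfolding r_def by (cases Y) auto
  have no_end_at_x1: "r (n - 1) X False = 0" for X
    using in_n size_S0 matching_edge_disks[OF mt, of "n - 1" False] le[of "n - 1" False False]
      le[of "n - 1" True False] n
    unfolding r_def by (cases X) auto
  have S1_labels: "s 0 \<and> s n" if "s \<in># S1" for s
    using no_transitions_from_imp_label_ne[OF _ that, of 0 False]
      no_transitions_into_imp_label_ne[OF _ that, of "n - 1" False] S1 no_start_at_x1 no_end_at_x1 n
    by simp
  have "count (transitions (S0 + S1) j) (X, Y) = N j (edge_disk X Y)" if "j < n" for j X Y
    using S1[OF that] le[OF that, of X Y] unfolding r_def by simp
  moreover have "s 0 = s n" if "s \<in># S0 + S1" for s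
    using that S0_labels[of s] S1_labels[of s] by auto
  ultimately have "curve_system n N (S0 + S1)"
    unfolding curve_system_def by blast
  then show thesis by (rule that)
qed

section \<open>Immersed gluings and curve systems\<close>

lemma global_gluing_bij_edge_disks:
  assumes "global_gluing n N \<sigma>" and "i < n"
  shows "bij_betw (\<sigma> i) (edge_disks N i) (edge_disks N (Suc i mod n))"
proof -
  have bij: "bij_betw (\<sigma> i) (disks_next N i) (disks_prev N (Suc i mod n))"
    and arc: "\<And>x. x \<in> disks_next N i \<Longrightarrow> arc_prev (fst (\<sigma> i x)) = arc_next (fst x)"
    using assms unfolding global_gluing_def by auto
  have "meets_e (fst (\<sigma> i x)) \<longleftrightarrow> meets_e (fst x)" if "x \<in> disks_next N i" for x
    unfolding meets_e_iff_arc_prev[of "fst (\<sigma> i x)"] meets_e_iff_arc_next[of "fst x"] arc[OF that] ..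
  then have "bij_betw (\<sigma> i) {x \<in> disks_next N i. meets_e (fst x)} {y \<in> disks_prev N (Suc i mod n). meets_e (fst y)}"
    by (rule bij_betw_restrict_filter[OF bij])
  moreover have "{x \<in> disks_next N j. meets_e (fst x)} = edge_disks N j"
    and "{y \<in> disks_prev N j. meets_e (fst y)} = edge_disks N j" for j
    unfolding disks_next_def disks_prev_def edge_disks_def by (auto simp: meets_e_def)
  ultimately show ?thesis by simp
qed

lemma walk_bij_edge_disks:
  assumes "global_gluing n N \<sigma>" and "j < n"
  shows "bij_betw (walk \<sigma> j) (edge_disks N 0) (edge_disks N j)"
  using assms(2)
proof (induction j)
  case 0
  show ?case by (simp add: bij_betw_def)
next
  case (Suc j)
  have "bij_betw (\<sigma> j) (edge_disks N j) (edge_disks N (Suc j))"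
    using global_gluing_bij_edge_disks[OF assms(1), of j] Suc.prems by simp
  then have "bij_betw (\<sigma> j \<circ> walk \<sigma> j) (edge_disks N 0) (edge_disks N (Suc j))"
    using Suc by (auto intro: bij_betw_trans)
  then show ?case by (simp add: comp_def)
qed

lemma immersible_imp_curve_system:
  assumes "immersible n N"
  obtains S where "curve_system n N S"
proof -
  obtain \<sigma> where gluing: "global_gluing n N \<sigma>" and immersed: "immersed_gluing n N \<sigma>"
    using assms unfolding immersible_def by blast
  define curve where "curve x j = (arc_prev (fst (walk \<sigma> j x)) = Some 1)" for x j
  define S where "S = {#curve x. x \<in># mset_set (edge_disks N 0)#}"
  have "curve x 0 = curve x n" if "x \<in> edge_disks N 0" for x
    using immersed that unfolding immersed_gluing_def edge_disks_def curve_def by auto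
  then have closed: "\<forall>s\<in>#S. s 0 = s n" unfolding S_def by simp
  have "count (transitions S j) (X, Y) = N j (edge_disk X Y)" if "j < n" for j X Y
  proof -
    have "curve x j = X \<and> curve x (Suc j) = Y \<longleftrightarrow> fst (walk \<sigma> j x) = edge_disk X Y"
      if "x \<in> edge_disks N 0" for x
    proof -
      have "walk \<sigma> j x \<in> edge_disks N j"
        using walk_bij_edge_disks[OF gluing \<open>j < n\<close>] that unfolding bij_betw_def by blast
      moreover have "arc_prev (fst (\<sigma> j y)) = arc_next (fst y)" if "y \<in> disks_next N j" for y
        using gluing \<open>j < n\<close> that unfolding global_gluing_def by blast
      ultimately show ?thesis
        unfolding curve_def using edge_disk_eq_iff[of "fst (walk \<sigma> j x)" X Y]
        by (auto simp: edge_disks_def disks_next_def meets_e_iff_arc_next)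
    qed
    then have "count (transitions S j) (X, Y) = card {x \<in> edge_disks N 0. fst (walk \<sigma> j x) = edge_disk X Y}"
      unfolding count_transitions S_def by (simp flip: image_mset_filter_mset_swap cong: conj_cong)
    also have "\<dots> = card {y \<in> edge_disks N j. fst y = edge_disk X Y}"
      by (rule bij_betw_card_filter[OF walk_bij_edge_disks[OF gluing \<open>j < n\<close>]])
    also have "\<dots> = N j (edge_disk X Y)" by (simp add: card_edge_disks_fibre)
    finally show ?thesis .
  qed
  with closed have "curve_system n N S" unfolding curve_system_def by blast
  then show thesis by (rule that)
qed

lemma global_gluingI:
  assumes edge: "\<And>i. i < n \<Longrightarrow> bij_betw (\<sigma> i) (edge_disks N i) (edge_disks N (Suc i mod n))"
    and edge_arc: "\<And>i x. i < n \<Longrightarrow> x \<in> edge_disks N i \<Longrightarrow> arc_prev (fst (\<sigma> i x)) = arc_next (fst x)"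
    and off: "\<And>i. i < n \<Longrightarrow> bij_betw (\<sigma> i) (off_edge_next N i) (off_edge_prev N (Suc i mod n))"
  shows "global_gluing n N \<sigma>"
  unfolding global_gluing_def
proof (intro allI impI conjI ballI)
  fix i assume "i < n"
  show "bij_betw (\<sigma> i) (disks_next N i) (disks_prev N ((i + 1) mod n))"
    unfolding disks_next_eq disks_prev_eq
    using bij_betw_combine[OF edge[OF \<open>i < n\<close>] off[OF \<open>i < n\<close>]] edge_disks_disjoint_off_edge by simp
  fix x assume "x \<in> disks_next N i"
  then consider "x \<in> edge_disks N i" | "x \<in> off_edge_next N i" unfolding disks_next_eq by blast
  then show "arc_prev (fst (\<sigma> i x)) = arc_next (fst x)"
  proof cases
    case 2
    then have "\<sigma> i x \<in> off_edge_prev N (Suc i mod n)"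
      using off[OF \<open>i < n\<close>] unfolding bij_betw_def by blast
    with 2 show ?thesis unfolding off_edge_next_def off_edge_prev_def by auto
  qed (rule edge_arc[OF \<open>i < n\<close>])
qed

lemma walk_along_strands:
  assumes along: "\<And>i l. i < n \<Longrightarrow> l \<in> L \<Longrightarrow> \<sigma> i (\<nu> i l) = \<nu> (Suc i mod n) l"
    and "l \<in> L" and "j \<le> n"
  shows "walk \<sigma> j (\<nu> 0 l) = \<nu> (j mod n) l"
  using assms(3)
proof (induction j)
  case (Suc j)
  then have "walk \<sigma> (Suc j) (\<nu> 0 l) = \<sigma> j (\<nu> j l)" by simp
  also have "\<dots> = \<nu> (Suc j mod n) l" using along[OF _ \<open>l \<in> L\<close>, of j] Suc.prems by simp
  finally show ?case .
qed simp

lemma curve_system_ex_bij_edge_disks: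
  assumes "curve_system n N (mset ss)" and "j < n"
  shows "\<exists>\<nu>. bij_betw \<nu> {..<length ss} (edge_disks N j) \<and>
    (\<forall>l<length ss. fst (\<nu> l) = edge_disk ((ss ! l) j) ((ss ! l) (Suc j)))"
proof -
  have fibres: "card {l \<in> {..<length ss}. edge_disk ((ss ! l) j) ((ss ! l) (Suc j)) = d} =
    card {x \<in> edge_disks N j. fst x = d}" for d
  proof (cases "meets_e d")
    case True
    then obtain X Y where d: "d = edge_disk X Y" by (auto simp: meets_e_iff_edge_disk)
    have "card {l \<in> {..<length ss}. edge_disk ((ss ! l) j) ((ss ! l) (Suc j)) = d} =
      card {l. l < length ss \<and> (ss ! l) j = X \<and> (ss ! l) (Suc j) = Y}"
      unfolding d by (simp add: conj_commute)
    also have "\<dots> = N j d"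
      using assms card_indices_eq_size_filter[of ss "\<lambda>s. s j = X \<and> s (Suc j) = Y"]
      unfolding d curve_system_def by (simp flip: count_transitions)
    finally show ?thesis using card_edge_disks_fibre[OF True] by simp
  next
    case False
    then have "{l \<in> {..<length ss}. edge_disk ((ss ! l) j) ((ss ! l) (Suc j)) = d} = {}"
      and "{x \<in> edge_disks N j. fst x = d} = {}"
      unfolding edge_disks_def by auto
    then show ?thesis by (simp only: card.empty)
  qed
  obtain \<nu> where "bij_betw \<nu> {..<length ss} (edge_disks N j)"
    and "\<And>l. l \<in> {..<length ss} \<Longrightarrow> fst (\<nu> l) = edge_disk ((ss ! l) j) ((ss ! l) (Suc j))"
    using ex_bij_betw_fibrewise[OF finite_lessThan finite_edge_disks fibres] by blast
  then show ?thesis by auto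
qed

lemma ex_global_gluing_along_strands:
  assumes mt: "matching n N"
    and \<nu>_bij: "\<And>j. j < n \<Longrightarrow> bij_betw (\<nu> j) L (edge_disks N j)"
    and \<nu>_arcs: "\<And>i l. i < n \<Longrightarrow> l \<in> L \<Longrightarrow> arc_prev (fst (\<nu> (Suc i mod n) l)) = arc_next (fst (\<nu> i l))"
  obtains \<sigma> where "global_gluing n N \<sigma>"
    and "\<And>i l. i < n \<Longrightarrow> l \<in> L \<Longrightarrow> \<sigma> i (\<nu> i l) = \<nu> (Suc i mod n) l"
proof -
  define \<rho> where "\<rho> i = (SOME \<rho>. bij_betw \<rho> (off_edge_next N i) (off_edge_prev N (Suc i mod n)))" for i
  have \<rho>: "bij_betw (\<rho> i) (off_edge_next N i) (off_edge_prev N (Suc i mod n))" if "i < n" for i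
    using matching_ex_bij_off_edge[OF mt that] unfolding \<rho>_def by (rule someI_ex)
  define \<sigma> where "\<sigma> i x = (if x \<in> edge_disks N i then \<nu> (Suc i mod n) (inv_into L (\<nu> i) x) else \<rho> i x)"
    for i x
  have along: "\<sigma> i (\<nu> i l) = \<nu> (Suc i mod n) l" if "i < n" "l \<in> L" for i l
    using \<nu>_bij[OF that(1)] that(2) unfolding \<sigma>_def bij_betw_def by auto
  have "global_gluing n N \<sigma>"
  proof (rule global_gluingI)
    fix i assume i: "i < n"
    then have i': "Suc i mod n < n" by simp
    have "bij_betw (\<nu> (Suc i mod n) \<circ> inv_into L (\<nu> i)) (edge_disks N i) (edge_disks N (Suc i mod n))"
      by (rule bij_betw_trans[OF bij_betw_inv_into[OF \<nu>_bij[OF i]] \<nu>_bij[OF i']])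
    then show "bij_betw (\<sigma> i) (edge_disks N i) (edge_disks N (Suc i mod n))"
      by (rule bij_betw_cong[THEN iffD1, rotated]) (simp add: \<sigma>_def)
    have "\<sigma> i x = \<rho> i x" if "x \<in> off_edge_next N i" for x
      using that edge_disks_disjoint_off_edge(1)[of N i] unfolding \<sigma>_def by auto
    then have "bij_betw (\<sigma> i) (off_edge_next N i) B \<longleftrightarrow> bij_betw (\<rho> i) (off_edge_next N i) B" for B
      by (rule bij_betw_cong)
    with \<rho>[OF i] show "bij_betw (\<sigma> i) (off_edge_next N i) (off_edge_prev N (Suc i mod n))" by blast
    fix x assume "x \<in> edge_disks N i"
    then obtain l where "l \<in> L" "x = \<nu> i l"
      using \<nu>_bij[OF i] unfolding bij_betw_def by blast
    then show "arc_prev (fst (\<sigma> i x)) = arc_next (fst x)"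
      using along[OF i] \<nu>_arcs[OF i] by simp
  qed
  with along show thesis using that by blast
qed

lemma curve_system_imp_immersible:
  assumes n: "n \<ge> 1" and mt: "matching n N" and curves: "curve_system n N S"
  shows "immersible n N"
proof -
  obtain ss where ss: "mset ss = S" using ex_mset by blast
  let ?L = "{..<length ss}"
  have wrap: "(ss ! l) (Suc i mod n) = (ss ! l) (Suc i)" if "i < n" "l < length ss" for i l
  proof (cases "Suc i < n")
    case False
    have "ss ! l \<in># S" using ss that(2) by auto
    then have "(ss ! l) 0 = (ss ! l) n"
      by (rule bspec[OF conjunct1[OF curves[unfolded curve_system_def]]])
    moreover have "Suc i = n" using False that(1) by simp
    ultimately show ?thesis by simp
  qed simp
  have "\<forall>j\<in>{..<n}. \<exists>\<nu>. bij_betw \<nu> ?L (edge_disks N j) \<and>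
    (\<forall>l<length ss. fst (\<nu> l) = edge_disk ((ss ! l) j) ((ss ! l) (Suc j)))"
    using curve_system_ex_bij_edge_disks curves ss by blast
  then obtain \<nu> where \<nu>: "\<forall>j\<in>{..<n}. bij_betw (\<nu> j) ?L (edge_disks N j) \<and>
    (\<forall>l<length ss. fst (\<nu> j l) = edge_disk ((ss ! l) j) ((ss ! l) (Suc j)))"
    by (rule bchoice[elim_format]) blast
  have \<nu>_bij: "bij_betw (\<nu> j) ?L (edge_disks N j)" if "j < n" for j
    using \<nu> that by auto
  have "arc_prev (fst (\<nu> (Suc i mod n) l)) = arc_next (fst (\<nu> i l))" if "i < n" "l \<in> ?L" for i l
    using \<nu> that wrap[OF that(1), of l] by simp
  then obtain \<sigma> where gluing: "global_gluing n N \<sigma>"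
    and along: "\<And>i l. i < n \<Longrightarrow> l \<in> ?L \<Longrightarrow> \<sigma> i (\<nu> i l) = \<nu> (Suc i mod n) l"
    using ex_global_gluing_along_strands[OF mt \<nu>_bij] by blast
  have "immersed_gluing n N \<sigma>"
    unfolding immersed_gluing_def
  proof (intro allI impI)
    fix d k assume "meets_e d \<and> k < N 0 d"
    then have "(d, k) \<in> edge_disks N 0" by (simp add: edge_disks_def)
    then obtain l where "l \<in> ?L" "(d, k) = \<nu> 0 l"
      using \<nu>_bij[of 0] n unfolding bij_betw_def by auto
    then show "walk \<sigma> n (d, k) = (d, k)"
      using walk_along_strands[where \<sigma> = \<sigma> and \<nu> = \<nu> and L = ?L and j = n, OF along] by simp
  qed
  with gluing show ?thesis unfolding immersible_def by blast
qed

theorem lemma13: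
  fixes n :: nat and N :: "nat \<Rightarrow> disk \<Rightarrow> nat"
  assumes "n \<ge> 1"
    and "matching n N"
  shows "immersible n N \<longleftrightarrow>
    max_flow (G_edges n) (G_cap N) (U 0) (U n) =
      (\<Sum>a\<in>{a\<in>G_edges n. fst a = U 0}. G_cap N a)"
proof -
  have "max_flow (G_edges n) (G_cap N) (U 0) (U n) = (\<Sum>a\<in>{a\<in>G_edges n. fst a = U 0}. G_cap N a)
      \<longleftrightarrow> (\<exists>P. is_flow (G_edges n) (G_cap N) (U 0) (U n) P \<and>
        size P = (\<Sum>a\<in>{a\<in>G_edges n. fst a = U 0}. G_cap N a))"
    by (rule max_flow_eq_out_capacity_iff) (use assms(1) in \<open>simp_all add: G_edges_def\<close>)
  also have "\<dots> \<longleftrightarrow> (\<exists>P. is_flow (G_edges n) (G_cap N) (U 0) (U n) P \<and> size P = N 0 T0 + N 0 Q03)"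
    by (simp only: G_out_capacity_U0[OF assms(1)])
  also have "\<dots> \<longleftrightarrow> (\<exists>S. flow_strands n N S \<and> size S = N 0 T0 + N 0 Q03)"
    by (rule ex_flow_iff_ex_flow_strands)
  also have "\<dots> \<longleftrightarrow> (\<exists>S. curve_system n N S)"
    using curve_system_imp_flow_strands[OF assms(1)] flow_strands_imp_curve_system[OF assms] by blast
  also have "\<dots> \<longleftrightarrow> immersible n N"
    using immersible_imp_curve_system curve_system_imp_immersible[OF assms] by blast
  finally show ?thesis by blast
qed

end
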